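(* Let $f:M\to\mathbb{R}^3$ be an immersion with eq\"uiaffine transversal vector field $\xi$ and positive definite induced bilinear form $h$, let $(u,v)$ be isothermal coordinates centered at an umbilical point $(0,0)$ with $\lambda_0=b_{11}(0,0)=b_{22}(0,0)\neq0$, and set $q_0=f(0,0)+\lambda_0^{-1}\xi(0,0)$. Let $k\ge1$. Then $(0,0)$ is umbilical of order $\ge k$ (i.e. the $(k-1)$-jet at $(0,0)$ of $\mathcal{B}=(b_{11}-b_{22},2b_{12})$ vanishes) if and only if $$f(u,v)+\lambda_0^{-1}\xi(u,v)=q_0+O(k+1),$$ where $O(k+1)$ denotes terms of degree at least $k+1$ in $(u,v)$.
   Context: $D$ is the flat connection of $\mathbb{R}^3$; $h$ and the shape operator $B$ are defined by $D_Xf_*Y=f_*(\nabla_XY)+h(X,Y)\xi$, $D_X\xi=-f_*(BX)+\tau(X)\xi$, eq\"uiaffine meaning $\tau=0$. Isothermal coordinates: $h(\partial_u,\partial_u)=h(\partial_v,\partial_v)=\rho$, $h(\partial_u,\partial_v)=0$. The matrix of $B$ is given by $\xi_u=-b_{11}f_u-b_{21}f_v$, $\xi_v=-b_{12}f_u-b_{22}f_v$ (with $b_{12}=b_{21}$). Umbilical: $B$ a multiple of the identity. *)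

theory Defs
  imports "HOL-Analysis.Analysis" "HOL-Analysis.Cross3"
begin

definition pu :: "(real \<times> real \<Rightarrow> 'a::real_normed_vector) \<Rightarrow> real \<times> real \<Rightarrow> 'a" where
  "pu g = (\<lambda>(u,v). vector_derivative (\<lambda>t. g (t, v)) (at u))"

definition pv :: "(real \<times> real \<Rightarrow> 'a::real_normed_vector) \<Rightarrow> real \<times> real \<Rightarrow> 'a" where
  "pv g = (\<lambda>(u,v). vector_derivative (\<lambda>t. g (u, t)) (at v))"

definition pd :: "nat \<Rightarrow> nat \<Rightarrow> (real \<times> real \<Rightarrow> 'a::real_normed_vector) \<Rightarrow> real \<times> real \<Rightarrow> 'a" where
  "pd i j g = (pu ^^ i) ((pv ^^ j) g)"

definition smooth_on2 :: "(real \<times> real) set \<Rightarrow> (real \<times> real \<Rightarrow> 'a::real_normed_vector) \<Rightarrow> bool" where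
  "smooth_on2 U g \<longleftrightarrow> (\<forall>i j. \<forall>p\<in>U. pd i j g differentiable (at p))"

definition jet_vanishes :: "nat \<Rightarrow> (real \<times> real \<Rightarrow> 'a::real_normed_vector) \<Rightarrow> real \<times> real \<Rightarrow> bool" where
  "jet_vanishes m g p0 \<longleftrightarrow> (\<forall>i j. i + j \<le> m \<longrightarrow> pd i j g p0 = 0)"

end

theory Submission
  imports Defs
begin

(* The focal map G = f + xi/lambda0 - q0 vanishes at the umbilic, and the Weingarten formula gives
   G_u = A f_u + B f_v and G_v = B f_u + C f_v with A = 1 - b11/lambda0, B = -b12/lambda0 and
   C = 1 - b22/lambda0, all vanishing at the origin. Since f_u and f_v are independent, the k-jet of G
   vanishes iff the (k-1)-jets of A, B and C vanish. Up to the factor -1/lambda0, B and C - A are b12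
   and b11 - b22, and they already control A and C: the integrability condition G_uv = G_vu reads
     (A_v - B_u) f_u + (B_v - C_u) f_v = B (f_uu - f_vv) + (C - A) f_uv,
   so the (k-2)-jets of A_v and C_u vanish, and with the derivatives of C - A this accounts for all
   first partials of A and C. *)

section \<open>Partial derivatives\<close>

lemma pu_eqI: "((\<lambda>t. g (t, v)) has_vector_derivative d) (at u) \<Longrightarrow> pu g (u, v) = d"
  by (simp add: pu_def vector_derivative_at)

lemma pv_eqI: "((\<lambda>t. g (u, t)) has_vector_derivative d) (at v) \<Longrightarrow> pv g (u, v) = d"
  by (simp add: pv_def vector_derivative_at)

lemma pu_swap: "pu (\<lambda>q. g (snd q, fst q)) (v, u) = pv g (u, v)"
  by (simp add: pu_def pv_def)

lemma has_derivative_imp_has_vector_derivative_pu: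
  assumes "(g has_derivative D) (at (u, v))"
  shows "((\<lambda>t. g (t, v)) has_vector_derivative D (1, 0)) (at u)"
proof -
  have "((\<lambda>t. (t, v)) has_derivative (\<lambda>t. t *\<^sub>R (1, 0))) (at u)"
    by (auto intro!: derivative_eq_intros)
  from has_derivative_compose[OF this assms] show ?thesis
    by (simp only: has_vector_derivative_def linear_scale[OF has_derivative_linear[OF assms]])
qed

lemma has_derivative_imp_has_vector_derivative_pv:
  assumes "(g has_derivative D) (at (u, v))"
  shows "((\<lambda>t. g (u, t)) has_vector_derivative D (0, 1)) (at v)"
proof -
  have "((\<lambda>t. (u, t)) has_derivative (\<lambda>t. t *\<^sub>R (0, 1))) (at v)"
    by (auto intro!: derivative_eq_intros)
  from has_derivative_compose[OF this assms] show ?thesis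
    by (simp only: has_vector_derivative_def linear_scale[OF has_derivative_linear[OF assms]])
qed

lemma pu_has_derivative: "(g has_derivative D) (at p) \<Longrightarrow> pu g p = D (1, 0)"
  by (cases p) (auto intro: pu_eqI has_derivative_imp_has_vector_derivative_pu)

lemma pv_has_derivative: "(g has_derivative D) (at p) \<Longrightarrow> pv g p = D (0, 1)"
  by (cases p) (auto intro: pv_eqI has_derivative_imp_has_vector_derivative_pv)

lemma differentiable_imp_has_vector_derivative_pu:
  "g differentiable at (u, v) \<Longrightarrow> ((\<lambda>t. g (t, v)) has_vector_derivative pu g (u, v)) (at u)"
  unfolding differentiable_def
  by (metis has_derivative_imp_has_vector_derivative_pu pu_has_derivative)

lemma pu_const [simp]: "pu (\<lambda>q. c) p = 0"
  by (simp add: pu_has_derivative[OF has_derivative_const])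

lemma pv_const [simp]: "pv (\<lambda>q. c) p = 0"
  by (simp add: pv_has_derivative[OF has_derivative_const])

lemma pu_add:
  assumes "g differentiable at p" "h differentiable at p"
  shows "pu (\<lambda>q. g q + h q) p = pu g p + pu h p"
proof -
  obtain Dg Dh where Dg: "(g has_derivative Dg) (at p)" and Dh: "(h has_derivative Dh) (at p)"
    using assms unfolding differentiable_def by blast
  show ?thesis
    using pu_has_derivative[OF has_derivative_add[OF Dg Dh]]
    by (simp add: pu_has_derivative[OF Dg] pu_has_derivative[OF Dh])
qed

lemma pv_add:
  assumes "g differentiable at p" "h differentiable at p"
  shows "pv (\<lambda>q. g q + h q) p = pv g p + pv h p"
proof -
  obtain Dg Dh where Dg: "(g has_derivative Dg) (at p)" and Dh: "(h has_derivative Dh) (at p)"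
    using assms unfolding differentiable_def by blast
  show ?thesis
    using pv_has_derivative[OF has_derivative_add[OF Dg Dh]]
    by (simp add: pv_has_derivative[OF Dg] pv_has_derivative[OF Dh])
qed

lemma differentiable_bilinear:
  assumes "bounded_bilinear bil" "x differentiable at p" "y differentiable at p"
  shows "(\<lambda>q. bil (x q) (y q)) differentiable at p"
  using assms(2,3) bounded_bilinear.FDERIV[OF assms(1)] unfolding differentiable_def by blast

lemma pu_bilinear:
  assumes "bounded_bilinear bil" "x differentiable at p" "y differentiable at p"
  shows "pu (\<lambda>q. bil (x q) (y q)) p = bil (x p) (pu y p) + bil (pu x p) (y p)"
proof -
  obtain Dx Dy where Dx: "(x has_derivative Dx) (at p)" and Dy: "(y has_derivative Dy) (at p)"
    using assms unfolding differentiable_def by blast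
  show ?thesis
    using pu_has_derivative[OF bounded_bilinear.FDERIV[OF assms(1) Dx Dy]]
    by (simp add: pu_has_derivative[OF Dx] pu_has_derivative[OF Dy])
qed

lemma pv_bilinear:
  assumes "bounded_bilinear bil" "x differentiable at p" "y differentiable at p"
  shows "pv (\<lambda>q. bil (x q) (y q)) p = bil (x p) (pv y p) + bil (pv x p) (y p)"
proof -
  obtain Dx Dy where Dx: "(x has_derivative Dx) (at p)" and Dy: "(y has_derivative Dy) (at p)"
    using assms unfolding differentiable_def by blast
  show ?thesis
    using pv_has_derivative[OF bounded_bilinear.FDERIV[OF assms(1) Dx Dy]]
    by (simp add: pv_has_derivative[OF Dx] pv_has_derivative[OF Dy])
qed

lemma pu_linear:
  assumes "bounded_linear L" "g differentiable at p"
  shows "pu (\<lambda>q. L (g q)) p = L (pu g p)"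
proof -
  obtain D where D: "(g has_derivative D) (at p)"
    using assms unfolding differentiable_def by blast
  show ?thesis
    using pu_has_derivative[OF bounded_linear.has_derivative[OF assms(1) D]]
    by (simp add: pu_has_derivative[OF D])
qed

lemma pv_linear:
  assumes "bounded_linear L" "g differentiable at p"
  shows "pv (\<lambda>q. L (g q)) p = L (pv g p)"
proof -
  obtain D where D: "(g has_derivative D) (at p)"
    using assms unfolding differentiable_def by blast
  show ?thesis
    using pv_has_derivative[OF bounded_linear.has_derivative[OF assms(1) D]]
    by (simp add: pv_has_derivative[OF D])
qed

lemma pu_diff:
  "g differentiable at p \<Longrightarrow> h differentiable at p \<Longrightarrow> pu (\<lambda>q. g q - h q) p = pu g p - pu h p"
  using pu_add[of g p "\<lambda>q. - h q"] pu_linear[OF bounded_linear_minus[OF bounded_linear_ident], of h p]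
  by (simp add: differentiable_minus)

lemma pv_diff:
  "g differentiable at p \<Longrightarrow> h differentiable at p \<Longrightarrow> pv (\<lambda>q. g q - h q) p = pv g p - pv h p"
  using pv_add[of g p "\<lambda>q. - h q"] pv_linear[OF bounded_linear_minus[OF bounded_linear_ident], of h p]
  by (simp add: differentiable_minus)

lemma pu_inverse:
  fixes d :: "real \<times> real \<Rightarrow> real"
  assumes "d differentiable at p" "d p \<noteq> 0"
  shows "pu (\<lambda>q. inverse (d q)) p = - (inverse (d p) * pu d p * inverse (d p))"
proof -
  obtain D where D: "(d has_derivative D) (at p)"
    using assms unfolding differentiable_def by blast
  show ?thesis
    using pu_has_derivative[OF Deriv.has_derivative_inverse[OF assms(2) D]]
    by (simp add: pu_has_derivative[OF D])
qed

lemma pv_inverse: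
  fixes d :: "real \<times> real \<Rightarrow> real"
  assumes "d differentiable at p" "d p \<noteq> 0"
  shows "pv (\<lambda>q. inverse (d q)) p = - (inverse (d p) * pv d p * inverse (d p))"
proof -
  obtain D where D: "(d has_derivative D) (at p)"
    using assms unfolding differentiable_def by blast
  show ?thesis
    using pv_has_derivative[OF Deriv.has_derivative_inverse[OF assms(2) D]]
    by (simp add: pv_has_derivative[OF D])
qed

lemma pu_lincomb:
  assumes "X differentiable at q" "Y differentiable at q"
    "P differentiable at q" "Q differentiable at q"
  shows "pu (\<lambda>q. X q *\<^sub>R P q + Y q *\<^sub>R Q q) q =
    (X q *\<^sub>R pu P q + Y q *\<^sub>R pu Q q) + (pu X q *\<^sub>R P q + pu Y q *\<^sub>R Q q)"
  using assms
  by (simp add: pu_add pu_bilinear[OF bounded_bilinear_scaleR]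
    differentiable_bilinear[OF bounded_bilinear_scaleR])

lemma pv_lincomb:
  assumes "X differentiable at q" "Y differentiable at q" "P differentiable at q" "Q differentiable at q"
  shows "pv (\<lambda>q. X q *\<^sub>R P q + Y q *\<^sub>R Q q) q =
    (X q *\<^sub>R pv P q + Y q *\<^sub>R pv Q q) + (pv X q *\<^sub>R P q + pv Y q *\<^sub>R Q q)"
  using assms
  by (simp add: pv_add pv_bilinear[OF bounded_bilinear_scaleR]
    differentiable_bilinear[OF bounded_bilinear_scaleR])

lemma pu_cong_open:
  assumes "open U" "p \<in> U" "\<And>q. q \<in> U \<Longrightarrow> g q = h q"
  shows "pu g p = pu h p"
proof (cases p)
  case (Pair u v)
  have "open ((\<lambda>t. (t, v)) -` U)"
    by (intro open_vimage assms(1) continuous_intros)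
  then have "eventually (\<lambda>t. t \<in> UNIV \<longrightarrow> g (t, v) = h (t, v)) (nhds u)"
    using assms Pair by (auto simp: eventually_nhds)
  then show ?thesis
    using Pair by (simp add: pu_def vector_derivative_cong_eq)
qed

lemma pv_cong_open:
  assumes "open U" "p \<in> U" "\<And>q. q \<in> U \<Longrightarrow> g q = h q"
  shows "pv g p = pv h p"
proof (cases p)
  case (Pair u v)
  have "open ((\<lambda>t. (u, t)) -` U)"
    by (intro open_vimage assms(1) continuous_intros)
  then have "eventually (\<lambda>t. t \<in> UNIV \<longrightarrow> g (u, t) = h (u, t)) (nhds v)"
    using assms Pair by (auto simp: eventually_nhds)
  then show ?thesis
    using Pair by (simp add: pv_def vector_derivative_cong_eq)
qed

lemma differentiable_cong_open:
  "open U \<Longrightarrow> p \<in> U \<Longrightarrow> (\<And>q. q \<in> U \<Longrightarrow> g q = h q) \<Longrightarrow> g differentiable at p \<Longrightarrow> h differentiable at p"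
  unfolding differentiable_def using has_derivative_transform_within_open by blast

section \<open>Symmetry of mixed partial derivatives\<close>

lemma second_difference_bound:
  fixes h :: "real \<times> real \<Rightarrow> 'a::real_normed_vector"
  assumes "t > 0"
    and dh: "\<And>s. u \<le> s \<Longrightarrow> s \<le> u + t \<Longrightarrow> h differentiable at (s, v) \<and> h differentiable at (s, v + t)"
    and bound: "\<And>s. u < s \<Longrightarrow> s < u + t \<Longrightarrow> norm (pu h (s, v + t) - pu h (s, v) - a) \<le> B"
  shows "norm (h (u + t, v + t) - h (u + t, v) - h (u, v + t) + h (u, v) - t *\<^sub>R a) \<le> B * t"
proof -
  define \<psi> where "\<psi> s = h (s, v + t) - h (s, v) - s *\<^sub>R a" for s
  have \<psi>': "(\<psi> has_vector_derivative pu h (s, v + t) - pu h (s, v) - a) (at s)" if "u \<le> s" "s \<le> u + t" for s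
    unfolding \<psi>_def using dh[OF that]
    by (auto intro!: derivative_eq_intros differentiable_imp_has_vector_derivative_pu)
  have "norm (\<psi> (u + t) - \<psi> u) \<le> B * (u + t) - B * u"
  proof (rule differentiable_bound_general[where \<phi>' = "\<lambda>_. B"])
    show "continuous_on {u..u + t} \<psi>"
      using \<psi>' by (auto intro!: continuous_at_imp_continuous_on has_vector_derivative_continuous)
  qed (use assms \<psi>' in \<open>auto intro!: derivative_eq_intros continuous_intros\<close>)
  then show ?thesis
    unfolding \<psi>_def by (simp add: algebra_simps)
qed

lemma pu_increment_linear:
  fixes h :: "real \<times> real \<Rightarrow> 'a::real_normed_vector"
  assumes D: "(pu h has_derivative D) (at (u, v))" and e: "e > 0"
  obtains d where "d > 0"
    "\<And>t s. 0 < t \<Longrightarrow> t < d \<Longrightarrow> u \<le> s \<Longrightarrow> s \<le> u + t \<Longrightarrow>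
       norm (pu h (s, v + t) - pu h (s, v) - t *\<^sub>R D (0, 1)) \<le> e * t"
proof -
  define R where "R q = pu h q - pu h (u, v) - D (q - (u, v))" for q
  have "e / 4 > 0"
    using e by simp
  then obtain d where d: "d > 0" "\<And>q. norm (q - (u, v)) < d \<Longrightarrow> norm (R q) \<le> e / 4 * norm (q - (u, v))"
    using D unfolding has_derivative_at_alt R_def by blast
  show thesis
  proof (rule that[of "d / 2"])
    fix t s assume ts: "0 < t" "t < d / 2" "u \<le> s" "s \<le> u + t"
    have R_bound: "norm (R (s, v + c)) \<le> e * t / 2" if "0 \<le> c" "c \<le> t" for c
    proof -
      have near: "norm ((s, v + c) - (u, v)) \<le> 2 * t"
        using norm_Pair_le[of "s - u" c] that ts by simp
      then have "norm (R (s, v + c)) \<le> e / 4 * norm ((s, v + c) - (u, v))"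
        using ts by (intro d(2)) simp
      also have "\<dots> \<le> e / 4 * (2 * t)"
        using near e by (intro mult_left_mono) auto
      finally show ?thesis
        by simp
    qed
    have "D (s - u, t) - D (s - u, 0) = t *\<^sub>R D (0, 1)"
      using linear_diff[OF has_derivative_linear[OF D], of "(s - u, t)" "(s - u, 0)"]
        linear_scale[OF has_derivative_linear[OF D], of t "(0, 1)"] by simp
    then have "pu h (s, v + t) - pu h (s, v) - t *\<^sub>R D (0, 1) = R (s, v + t) - R (s, v)"
      unfolding R_def by (simp add: algebra_simps)
    then show "norm (pu h (s, v + t) - pu h (s, v) - t *\<^sub>R D (0, 1)) \<le> e * t"
      using R_bound[of t] R_bound[of 0] ts norm_triangle_ineq4[of "R (s, v + t)" "R (s, v)"] by simp
  qed (use d in auto)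
qed

lemma mixed_second_difference:
  fixes h :: "real \<times> real \<Rightarrow> 'a::real_normed_vector"
  assumes U: "open U" "(u, v) \<in> U" and dh: "\<And>q. q \<in> U \<Longrightarrow> h differentiable at q"
    and D: "(pu h has_derivative D) (at (u, v))" and e: "e > 0"
  obtains d where "d > 0"
    "\<And>t. 0 < t \<Longrightarrow> t < d \<Longrightarrow>
       norm (h (u + t, v + t) - h (u + t, v) - h (u, v + t) + h (u, v) - (t * t) *\<^sub>R D (0, 1)) \<le> e * (t * t)"
proof -
  obtain d where d: "d > 0" "\<And>t s. 0 < t \<Longrightarrow> t < d \<Longrightarrow> u \<le> s \<Longrightarrow> s \<le> u + t \<Longrightarrow>
       norm (pu h (s, v + t) - pu h (s, v) - t *\<^sub>R D (0, 1)) \<le> e * t"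
    using pu_increment_linear[OF D e] by blast
  obtain r where r: "r > 0" "ball (u, v) r \<subseteq> U"
    using U open_contains_ball by blast
  show thesis
  proof (rule that[of "min d r / 2"])
    fix t assume t: "0 < t" "t < min d r / 2"
    have "(s, v + c) \<in> U" if "u \<le> s" "s \<le> u + t" "0 \<le> c" "c \<le> t" for s c
    proof -
      have "dist (s, v + c) (u, v) < r"
        unfolding dist_norm using norm_Pair_le[of "s - u" c] that t by simp
      then show ?thesis
        using r(2) by (auto simp: dist_commute)
    qed
    then have "h differentiable at (s, v) \<and> h differentiable at (s, v + t)" if "u \<le> s" "s \<le> u + t" for s
      using that t dh by (metis add_0_right order_refl less_imp_le)
    from second_difference_bound[OF t(1) this d(2)]
    show "norm (h (u + t, v + t) - h (u + t, v) - h (u, v + t) + h (u, v) - (t * t) *\<^sub>R D (0, 1))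
      \<le> e * (t * t)"
      using t by (simp add: mult.assoc)
  qed (use d r in auto)
qed

lemma mixed_second_difference_transposed:
  fixes h :: "real \<times> real \<Rightarrow> 'a::real_normed_vector"
  assumes U: "open U" "(u, v) \<in> U" and dh: "\<And>q. q \<in> U \<Longrightarrow> h differentiable at q"
    and D: "(pv h has_derivative D) (at (u, v))" and e: "e > 0"
  obtains d where "d > 0"
    "\<And>t. 0 < t \<Longrightarrow> t < d \<Longrightarrow>
       norm (h (u + t, v + t) - h (u, v + t) - h (u + t, v) + h (u, v) - (t * t) *\<^sub>R D (1, 0)) \<le> e * (t * t)"
proof -
  define swap :: "real \<times> real \<Rightarrow> real \<times> real" where "swap q = (snd q, fst q)" for q
  have swap_deriv: "(swap has_derivative swap) (at q)" for q
    unfolding swap_def by (auto intro!: derivative_eq_intros)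
  have "open (swap -` U)" "(v, u) \<in> swap -` U"
    using U unfolding swap_def by (auto intro!: open_vimage continuous_intros)
  moreover have "(\<lambda>q. h (swap q)) differentiable at q" if "q \<in> swap -` U" for q
    using differentiable_compose[OF dh] that swap_deriv unfolding differentiable_def by blast
  moreover have "pu (\<lambda>q. h (swap q)) = (\<lambda>q. pv h (swap q))"
    using pu_swap[of h] unfolding swap_def by (auto simp: fun_eq_iff)
  then have "(pu (\<lambda>q. h (swap q)) has_derivative (\<lambda>q. D (swap q))) (at (v, u))"
    using has_derivative_compose[OF swap_deriv, of "pv h" D "(v, u)"] D by (simp add: swap_def)
  ultimately obtain d where "d > 0" and approx: "\<And>t. 0 < t \<Longrightarrow> t < d \<Longrightarrow> norm (h (swap (v + t, u + t))
      - h (swap (v + t, u)) - h (swap (v, u + t)) + h (swap (v, u)) - (t * t) *\<^sub>R D (swap (0, 1)))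
        \<le> e * (t * t)"
    using mixed_second_difference[of "swap -` U" v u "\<lambda>q. h (swap q)"] e by metis
  show thesis
    using that[OF \<open>d > 0\<close>] approx by (simp add: swap_def)
qed

text \<open>Both mixed partials are limits of the same normalized second difference.\<close>

lemma pv_pu_eq_pu_pv:
  fixes h :: "real \<times> real \<Rightarrow> 'a::real_normed_vector"
  assumes U: "open U" "p \<in> U" and dh: "\<And>q. q \<in> U \<Longrightarrow> h differentiable at q"
    and "pu h differentiable at p" "pv h differentiable at p"
  shows "pv (pu h) p = pu (pv h) p"
proof -
  obtain u v where p: "p = (u, v)"
    by (cases p)
  obtain Du Dv where Du: "(pu h has_derivative Du) (at (u, v))"
    and Dv: "(pv h has_derivative Dv) (at (u, v))"
    using assms(4,5) p unfolding differentiable_def by blast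
  have "norm (Du (0, 1) - Dv (1, 0)) \<le> e" if e: "e > 0" for e
  proof -
    have "e / 2 > 0"
      using e by simp
    obtain d1 where "d1 > 0" and approx1: "\<And>t. 0 < t \<Longrightarrow> t < d1 \<Longrightarrow>
        norm (h (u + t, v + t) - h (u + t, v) - h (u, v + t) + h (u, v) - (t * t) *\<^sub>R Du (0, 1))
          \<le> e / 2 * (t * t)"
      using mixed_second_difference[OF U(1) U(2)[unfolded p] dh Du \<open>e / 2 > 0\<close>] by blast
    obtain d2 where "d2 > 0" and approx2: "\<And>t. 0 < t \<Longrightarrow> t < d2 \<Longrightarrow>
        norm (h (u + t, v + t) - h (u, v + t) - h (u + t, v) + h (u, v) - (t * t) *\<^sub>R Dv (1, 0))
          \<le> e / 2 * (t * t)"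
      using mixed_second_difference_transposed[OF U(1) U(2)[unfolded p] dh Dv \<open>e / 2 > 0\<close>] by blast
    define t where "t = min d1 d2 / 2"
    have t: "0 < t" "t < d1" "t < d2"
      using \<open>d1 > 0\<close> \<open>d2 > 0\<close> unfolding t_def by auto
    have "(t * t) *\<^sub>R (Du (0, 1) - Dv (1, 0)) =
        (h (u + t, v + t) - h (u, v + t) - h (u + t, v) + h (u, v) - (t * t) *\<^sub>R Dv (1, 0)) -
        (h (u + t, v + t) - h (u + t, v) - h (u, v + t) + h (u, v) - (t * t) *\<^sub>R Du (0, 1))"
      by (simp add: algebra_simps)
    then have "(t * t) * norm (Du (0, 1) - Dv (1, 0)) \<le> e / 2 * (t * t) + e / 2 * (t * t)"
      using approx1[OF t(1,2)] approx2[OF t(1,3)] norm_triangle_ineq4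
      by (smt (verit) norm_scaleR zero_le_mult_iff)
    then show ?thesis
      using t by (simp add: mult.commute)
  qed
  then have "norm (Du (0, 1) - Dv (1, 0)) \<le> 0"
    using field_le_epsilon[of "norm (Du (0, 1) - Dv (1, 0))" 0] by simp
  then show ?thesis
    using p pv_has_derivative[OF Du] pu_has_derivative[OF Dv] by simp
qed

section \<open>Smooth functions\<close>

text \<open>Differentiability of the iterated partials taken in every order, not only of the pd i j
  required by smooth_on2. The two notions agree by the symmetry of mixed partials, and closure
  properties are proved by induction on this one.\<close>

fun partials_differentiable :: "nat \<Rightarrow> (real \<times> real) set \<Rightarrow> (real \<times> real \<Rightarrow> 'a::real_normed_vector) \<Rightarrow> bool"
  where
    "partials_differentiable 0 U g \<longleftrightarrow> (\<forall>p\<in>U. g differentiable at p)"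
  | "partials_differentiable (Suc n) U g \<longleftrightarrow>
      (\<forall>p\<in>U. g differentiable at p)
        \<and> partials_differentiable n U (pu g) \<and> partials_differentiable n U (pv g)"

declare partials_differentiable.simps(2) [simp del]

lemma partials_differentiable_imp_differentiable:
  "partials_differentiable n U g \<Longrightarrow> p \<in> U \<Longrightarrow> g differentiable at p"
  by (cases n) (auto simp: partials_differentiable.simps(2))

lemma partials_differentiable_SucI:
  "(\<And>p. p \<in> U \<Longrightarrow> g differentiable at p) \<Longrightarrow> partials_differentiable n U (pu g) \<Longrightarrow>
    partials_differentiable n U (pv g) \<Longrightarrow> partials_differentiable (Suc n) U g"
  by (simp add: partials_differentiable.simps(2))

lemma partials_differentiable_Suc_pu:
  "partials_differentiable (Suc n) U g \<Longrightarrow> partials_differentiable n U (pu g)"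
  by (simp add: partials_differentiable.simps(2))

lemma partials_differentiable_Suc_pv:
  "partials_differentiable (Suc n) U g \<Longrightarrow> partials_differentiable n U (pv g)"
  by (simp add: partials_differentiable.simps(2))

lemma partials_differentiable_Suc_imp:
  "partials_differentiable (Suc n) U g \<Longrightarrow> partials_differentiable n U g"
proof (induction n arbitrary: g)
  case 0
  then show ?case
    using partials_differentiable_imp_differentiable by auto
next
  case (Suc n)
  then show ?case
    using partials_differentiable_imp_differentiable
    by (blast intro: partials_differentiable_SucI Suc.IH
      partials_differentiable_Suc_pu partials_differentiable_Suc_pv)
qed

lemma partials_differentiable_cong:
  assumes "open U" "\<And>q. q \<in> U \<Longrightarrow> g q = h q" "partials_differentiable n U g"
  shows "partials_differentiable n U h"
  using assms(2,3)
proof (induction n arbitrary: g h)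
  case 0
  then show ?case
    using differentiable_cong_open[OF assms(1), of _ g h] by simp
next
  case (Suc n)
  have "partials_differentiable n U (pu h)"
    using Suc.IH[of "pu g" "pu h"] Suc.prems pu_cong_open[OF assms(1)] partials_differentiable_Suc_pu
    by blast
  moreover have "partials_differentiable n U (pv h)"
    using Suc.IH[of "pv g" "pv h"] Suc.prems pv_cong_open[OF assms(1)] partials_differentiable_Suc_pv
    by blast
  moreover have "h differentiable at p" if "p \<in> U" for p
    using differentiable_cong_open[OF assms(1) that, of g h] Suc.prems
      partials_differentiable_imp_differentiable that
    by blast
  ultimately show ?case
    by (rule partials_differentiable_SucI[rotated])
qed

lemma partials_differentiable_const: "partials_differentiable n U (\<lambda>q. c)"
proof (induction n arbitrary: c)
  case (Suc n)
  have "pu (\<lambda>q. c) = (\<lambda>q. 0)" "pv (\<lambda>q. c) = (\<lambda>q. 0)"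
    by (simp_all add: fun_eq_iff)
  then show ?case
    using Suc.IH[of 0] by (intro partials_differentiable_SucI) simp_all
qed simp

lemma partials_differentiable_add:
  assumes "open U" "partials_differentiable n U g" "partials_differentiable n U h"
  shows "partials_differentiable n U (\<lambda>q. g q + h q)"
  using assms(2,3)
proof (induction n arbitrary: g h)
  case 0
  then show ?case
    by (auto intro: differentiable_add)
next
  case (Suc n)
  have dg: "\<And>p. p \<in> U \<Longrightarrow> g differentiable at p" and dh: "\<And>p. p \<in> U \<Longrightarrow> h differentiable at p"
    using Suc.prems partials_differentiable_imp_differentiable by blast+
  have "partials_differentiable n U (\<lambda>q. pu g q + pu h q)"
    using Suc.IH Suc.prems partials_differentiable_Suc_pu by blast
  then have "partials_differentiable n U (pu (\<lambda>q. g q + h q))"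
    by (rule partials_differentiable_cong[OF assms(1), rotated]) (simp add: pu_add dg dh)
  moreover have "partials_differentiable n U (\<lambda>q. pv g q + pv h q)"
    using Suc.IH Suc.prems partials_differentiable_Suc_pv by blast
  then have "partials_differentiable n U (pv (\<lambda>q. g q + h q))"
    by (rule partials_differentiable_cong[OF assms(1), rotated]) (simp add: pv_add dg dh)
  ultimately show ?case
    by (intro partials_differentiable_SucI differentiable_add dg dh)
qed

lemma partials_differentiable_bilinear:
  assumes "open U" "bounded_bilinear bil"
    and "partials_differentiable n U x" "partials_differentiable n U y"
  shows "partials_differentiable n U (\<lambda>q. bil (x q) (y q))"
  using assms(3,4)
proof (induction n arbitrary: x y)
  case 0
  then show ?case
    by (simp add: differentiable_bilinear[OF assms(2)])
next
  case (Suc n)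
  have dx: "\<And>p. p \<in> U \<Longrightarrow> x differentiable at p" and dy: "\<And>p. p \<in> U \<Longrightarrow> y differentiable at p"
    using Suc.prems partials_differentiable_imp_differentiable by blast+
  have x: "partials_differentiable n U x" and y: "partials_differentiable n U y"
    using Suc.prems partials_differentiable_Suc_imp by blast+
  have "partials_differentiable n U (\<lambda>q. bil (x q) (pu y q) + bil (pu x q) (y q))"
    using Suc.prems
    by (intro partials_differentiable_add[OF assms(1)] Suc.IH x y partials_differentiable_Suc_pu)
  then have "partials_differentiable n U (pu (\<lambda>q. bil (x q) (y q)))"
    by (rule partials_differentiable_cong[OF assms(1), rotated]) (simp add: pu_bilinear[OF assms(2)] dx dy)
  moreover have "partials_differentiable n U (\<lambda>q. bil (x q) (pv y q) + bil (pv x q) (y q))"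
    using Suc.prems
    by (intro partials_differentiable_add[OF assms(1)] Suc.IH x y partials_differentiable_Suc_pv)
  then have "partials_differentiable n U (pv (\<lambda>q. bil (x q) (y q)))"
    by (rule partials_differentiable_cong[OF assms(1), rotated]) (simp add: pv_bilinear[OF assms(2)] dx dy)
  ultimately show ?case
    by (intro partials_differentiable_SucI differentiable_bilinear[OF assms(2)] dx dy)
qed

lemma partials_differentiable_linear:
  assumes "open U" "bounded_linear L" "partials_differentiable n U g"
  shows "partials_differentiable n U (\<lambda>q. L (g q))"
  using partials_differentiable_bilinear[OF assms(1)
    bounded_bilinear.comp[OF bounded_bilinear_scaleR bounded_linear_ident assms(2)]
      partials_differentiable_const[of n U 1] assms(3)]
  by simp

lemma partials_differentiable_inverse:
  fixes d :: "real \<times> real \<Rightarrow> real"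
  assumes "open U" "partials_differentiable n U d" "\<And>p. p \<in> U \<Longrightarrow> d p \<noteq> 0"
  shows "partials_differentiable n U (\<lambda>q. inverse (d q))"
  using assms(2)
proof (induction n)
  case 0
  have "(\<lambda>q. inverse (d q)) differentiable at p" if "p \<in> U" for p
    using 0 that assms(3)[OF that] by (intro differentiable_inverse) auto
  then show ?case
    by simp
next
  case (Suc n)
  have dd: "\<And>p. p \<in> U \<Longrightarrow> d differentiable at p"
    using Suc.prems partials_differentiable_imp_differentiable by blast
  have inv: "partials_differentiable n U (\<lambda>q. inverse (d q))"
    using Suc.IH Suc.prems partials_differentiable_Suc_imp by blast
  have minus: "bounded_linear (\<lambda>x::real. - x)"
    by (rule bounded_linear_minus[OF bounded_linear_ident])
  have "partials_differentiable n U (\<lambda>q. - (inverse (d q) * pu d q * inverse (d q)))"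
    using Suc.prems
    by (intro partials_differentiable_linear[OF assms(1) minus]
      partials_differentiable_bilinear[OF assms(1) bounded_bilinear_mult]
        inv partials_differentiable_Suc_pu)
  then have "partials_differentiable n U (pu (\<lambda>q. inverse (d q)))"
    by (rule partials_differentiable_cong[OF assms(1), rotated]) (simp add: pu_inverse dd assms(3))
  moreover have "partials_differentiable n U (\<lambda>q. - (inverse (d q) * pv d q * inverse (d q)))"
    using Suc.prems
    by (intro partials_differentiable_linear[OF assms(1) minus]
      partials_differentiable_bilinear[OF assms(1) bounded_bilinear_mult]
        inv partials_differentiable_Suc_pv)
  then have "partials_differentiable n U (pv (\<lambda>q. inverse (d q)))"
    by (rule partials_differentiable_cong[OF assms(1), rotated]) (simp add: pv_inverse dd assms(3))
  ultimately show ?case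
    by (intro partials_differentiable_SucI differentiable_inverse dd assms(3))
qed

lemma pd_0_0 [simp]: "pd 0 0 g = g"
  by (simp add: pd_def)

lemma pd_1_0 [simp]: "pd 1 0 g = pu g" and pd_0_1 [simp]: "pd 0 1 g = pv g"
  by (simp_all add: pd_def)

lemma pd_pv: "pd i j (pv g) = pd i (Suc j) g"
  by (simp add: pd_def funpow_Suc_right del: funpow.simps)

lemma funpow_pu_cong_open:
  assumes "open U" "\<And>q. q \<in> U \<Longrightarrow> g q = h q" "p \<in> U"
  shows "(pu ^^ i) g p = (pu ^^ i) h p"
  using assms(3)
proof (induction i arbitrary: p)
  case (Suc i)
  then show ?case
    using pu_cong_open[OF assms(1), of p "(pu ^^ i) g" "(pu ^^ i) h"] by simp
qed (use assms(2) in simp)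

lemma funpow_pv_cong_open:
  assumes "open U" "\<And>q. q \<in> U \<Longrightarrow> g q = h q" "p \<in> U"
  shows "(pv ^^ j) g p = (pv ^^ j) h p"
  using assms(3)
proof (induction j arbitrary: p)
  case (Suc j)
  then show ?case
    using pv_cong_open[OF assms(1), of p "(pv ^^ j) g" "(pv ^^ j) h"] by simp
qed (use assms(2) in simp)

lemma pd_cong_open:
  assumes "open U" "\<And>q. q \<in> U \<Longrightarrow> g q = h q" "p \<in> U"
  shows "pd i j g p = pd i j h p"
  unfolding pd_def using funpow_pv_cong_open[OF assms(1,2)]
  by (rule funpow_pu_cong_open[OF assms(1) _ assms(3)])

lemma smooth_on2_differentiable: "smooth_on2 U g \<Longrightarrow> p \<in> U \<Longrightarrow> g differentiable at p"
  unfolding smooth_on2_def by (metis pd_0_0)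

lemma smooth_on2_pv: "smooth_on2 U g \<Longrightarrow> smooth_on2 U (pv g)"
  unfolding smooth_on2_def pd_pv by blast

lemma smooth_on2_funpow_pv: "smooth_on2 U g \<Longrightarrow> smooth_on2 U ((pv ^^ j) g)"
  by (induction j) (simp_all add: smooth_on2_pv)

lemma smooth_on2_pv_pu_eq_pu_pv:
  assumes "open U" "smooth_on2 U g" "p \<in> U"
  shows "pv (pu g) p = pu (pv g) p"
  using assms(2,3) unfolding smooth_on2_def
  by (intro pv_pu_eq_pu_pv[OF assms(1,3)]) (metis pd_0_0 pd_1_0 pd_0_1)+

lemma funpow_pv_pu_eq_pu_funpow_pv:
  assumes "open U" "smooth_on2 U g" "p \<in> U"
  shows "(pv ^^ j) (pu g) p = pu ((pv ^^ j) g) p"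
  using assms(3)
proof (induction j arbitrary: p)
  case (Suc j)
  have "(pv ^^ Suc j) (pu g) p = pv ((pv ^^ j) (pu g)) p"
    by simp
  also have "\<dots> = pv (pu ((pv ^^ j) g)) p"
    by (rule pv_cong_open[OF assms(1) Suc.prems Suc.IH])
  also have "\<dots> = pu ((pv ^^ Suc j) g) p"
    using smooth_on2_pv_pu_eq_pu_pv[OF assms(1) smooth_on2_funpow_pv[OF assms(2)] Suc.prems] by simp
  finally show ?case .
qed simp

lemma pd_pu:
  assumes "open U" "smooth_on2 U g" "p \<in> U"
  shows "pd i j (pu g) p = pd (Suc i) j g p"
  unfolding pd_def funpow_Suc_right comp_def
  by (rule funpow_pu_cong_open[OF assms(1) funpow_pv_pu_eq_pu_funpow_pv[OF assms(1,2)] assms(3)])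

lemma smooth_on2_pu:
  assumes "open U" "smooth_on2 U g"
  shows "smooth_on2 U (pu g)"
  unfolding smooth_on2_def
proof (intro allI ballI)
  fix i j p assume p: "p \<in> U"
  have "pd (Suc i) j g differentiable at p"
    using assms(2) p unfolding smooth_on2_def by blast
  then show "pd i j (pu g) differentiable at p"
    by (rule differentiable_cong_open[OF assms(1) p, rotated]) (simp add: pd_pu[OF assms])
qed

lemma smooth_on2_imp_partials_differentiable:
  "open U \<Longrightarrow> smooth_on2 U g \<Longrightarrow> partials_differentiable n U g"
proof (induction n arbitrary: g)
  case 0
  then show ?case
    by (simp add: smooth_on2_differentiable)
next
  case (Suc n)
  then show ?case
    by (intro partials_differentiable_SucI Suc.IH smooth_on2_pu smooth_on2_pv smooth_on2_differentiable)
qed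

lemma partials_differentiable_funpow_pu:
  "partials_differentiable (i + n) U g \<Longrightarrow> partials_differentiable n U ((pu ^^ i) g)"
  by (induction i arbitrary: g) (simp_all add: funpow_Suc_right partials_differentiable_Suc_pu
    del: funpow.simps)

lemma partials_differentiable_funpow_pv:
  "partials_differentiable (j + n) U g \<Longrightarrow> partials_differentiable n U ((pv ^^ j) g)"
  by (induction j arbitrary: g) (simp_all add: funpow_Suc_right partials_differentiable_Suc_pv
    del: funpow.simps)

lemma smooth_on2_iff_partials_differentiable:
  assumes "open U"
  shows "smooth_on2 U g \<longleftrightarrow> (\<forall>n. partials_differentiable n U g)"
proof
  assume "\<forall>n. partials_differentiable n U g"
  then have "partials_differentiable 0 U (pd i j g)" for i j
    unfolding pd_def
    using partials_differentiable_funpow_pu[of i 0 U "(pv ^^ j) g"]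
      partials_differentiable_funpow_pv[of j i U g]
    by simp
  then show "smooth_on2 U g"
    unfolding smooth_on2_def by simp
qed (use smooth_on2_imp_partials_differentiable[OF assms] in blast)

lemma smooth_on2_cong:
  assumes "open U" "\<And>q. q \<in> U \<Longrightarrow> g q = h q" "smooth_on2 U g"
  shows "smooth_on2 U h"
  using assms partials_differentiable_cong by (simp add: smooth_on2_iff_partials_differentiable) blast

lemma smooth_on2_const: "open U \<Longrightarrow> smooth_on2 U (\<lambda>q. c)"
  by (simp add: smooth_on2_iff_partials_differentiable partials_differentiable_const)

lemma smooth_on2_add:
  "open U \<Longrightarrow> smooth_on2 U g \<Longrightarrow> smooth_on2 U h \<Longrightarrow> smooth_on2 U (\<lambda>q. g q + h q)"
  by (simp add: smooth_on2_iff_partials_differentiable partials_differentiable_add)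

lemma smooth_on2_bilinear:
  "open U \<Longrightarrow> bounded_bilinear bil \<Longrightarrow> smooth_on2 U x \<Longrightarrow> smooth_on2 U y \<Longrightarrow>
    smooth_on2 U (\<lambda>q. bil (x q) (y q))"
  by (simp add: smooth_on2_iff_partials_differentiable partials_differentiable_bilinear)

lemma smooth_on2_linear:
  "open U \<Longrightarrow> bounded_linear L \<Longrightarrow> smooth_on2 U g \<Longrightarrow> smooth_on2 U (\<lambda>q. L (g q))"
  by (simp add: smooth_on2_iff_partials_differentiable partials_differentiable_linear)

lemma smooth_on2_inverse:
  fixes d :: "real \<times> real \<Rightarrow> real"
  shows "open U \<Longrightarrow> smooth_on2 U d \<Longrightarrow> (\<And>p. p \<in> U \<Longrightarrow> d p \<noteq> 0) \<Longrightarrow> smooth_on2 U (\<lambda>q. inverse (d q))"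
  by (simp add: smooth_on2_iff_partials_differentiable partials_differentiable_inverse)

lemma smooth_on2_diff:
  "open U \<Longrightarrow> smooth_on2 U g \<Longrightarrow> smooth_on2 U h \<Longrightarrow> smooth_on2 U (\<lambda>q. g q - h q)"
  using smooth_on2_add[of U g "\<lambda>q. - h q"]
    smooth_on2_linear[OF _ bounded_linear_minus[OF bounded_linear_ident], of U h]
  by simp

lemma smooth_on2_scaleR:
  "open U \<Longrightarrow> smooth_on2 U a \<Longrightarrow> smooth_on2 U g \<Longrightarrow> smooth_on2 U (\<lambda>q. a q *\<^sub>R g q)"
  by (rule smooth_on2_bilinear[OF _ bounded_bilinear_scaleR])

lemma smooth_on2_mult:
  fixes a b :: "real \<times> real \<Rightarrow> real"
  shows "open U \<Longrightarrow> smooth_on2 U a \<Longrightarrow> smooth_on2 U b \<Longrightarrow> smooth_on2 U (\<lambda>q. a q * b q)"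
  by (rule smooth_on2_bilinear[OF _ bounded_bilinear_mult])

lemma smooth_on2_lincomb:
  "open U \<Longrightarrow> smooth_on2 U X \<Longrightarrow> smooth_on2 U Y \<Longrightarrow> smooth_on2 U P \<Longrightarrow> smooth_on2 U Q \<Longrightarrow>
    smooth_on2 U (\<lambda>q. X q *\<^sub>R P q + Y q *\<^sub>R Q q)"
  by (intro smooth_on2_add smooth_on2_scaleR)

section \<open>Vanishing jets\<close>

lemma jet_vanishes_cong:
  assumes "open U" "p \<in> U" "\<And>q. q \<in> U \<Longrightarrow> g q = h q"
  shows "jet_vanishes m g p \<longleftrightarrow> jet_vanishes m h p"
  unfolding jet_vanishes_def using pd_cong_open[OF assms(1,3,2)] by simp

lemma jet_vanishes_0_iff [simp]: "jet_vanishes 0 g p \<longleftrightarrow> g p = 0"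
  by (simp add: jet_vanishes_def)

lemma jet_vanishes_mono: "jet_vanishes m g p \<Longrightarrow> n \<le> m \<Longrightarrow> jet_vanishes n g p"
  by (simp add: jet_vanishes_def)

lemma jet_vanishes_Suc_iff:
  assumes "open U" "p \<in> U" "smooth_on2 U g"
  shows "jet_vanishes (Suc m) g p \<longleftrightarrow> g p = 0 \<and> jet_vanishes m (pu g) p \<and> jet_vanishes m (pv g) p"
  unfolding jet_vanishes_def
proof safe
  assume vanish: "\<forall>i j. i + j \<le> Suc m \<longrightarrow> pd i j g p = 0"
  show "g p = 0"
    using vanish[rule_format, of 0 0] by simp
  show "pd i j (pu g) p = 0" if "i + j \<le> m" for i j
    using vanish[rule_format, of "Suc i" j] that pd_pu[OF assms(1,3,2)] by simp
  show "pd i j (pv g) p = 0" if "i + j \<le> m" for i j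
    using vanish[rule_format, of i "Suc j"] that by (simp add: pd_pv)
next
  fix i j
  assume "g p = 0" and vanish_u: "\<forall>i j. i + j \<le> m \<longrightarrow> pd i j (pu g) p = 0"
    and vanish_v: "\<forall>i j. i + j \<le> m \<longrightarrow> pd i j (pv g) p = 0" and "i + j \<le> Suc m"
  then show "pd i j g p = 0"
    using pd_pu[OF assms(1,3,2)] by (cases i; cases j) (auto simp: pd_pv[symmetric])
qed

lemma jet_vanishes_add:
  assumes "open U" "p \<in> U" "smooth_on2 U g" "smooth_on2 U h"
    and "jet_vanishes m g p" "jet_vanishes m h p"
  shows "jet_vanishes m (\<lambda>q. g q + h q) p"
  using assms(3-)
proof (induction m arbitrary: g h)
  case (Suc m)
  have dg: "\<And>q. q \<in> U \<Longrightarrow> g differentiable at q" and dh: "\<And>q. q \<in> U \<Longrightarrow> h differentiable at q"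
    using Suc.prems smooth_on2_differentiable by blast+
  have g: "g p = 0" "jet_vanishes m (pu g) p" "jet_vanishes m (pv g) p"
    and h: "h p = 0" "jet_vanishes m (pu h) p" "jet_vanishes m (pv h) p"
    using Suc.prems jet_vanishes_Suc_iff[OF assms(1,2)] by blast+
  then have "jet_vanishes m (\<lambda>q. pu g q + pu h q) p" "jet_vanishes m (\<lambda>q. pv g q + pv h q) p"
    using Suc.prems by (auto intro!: Suc.IH smooth_on2_pu[OF assms(1)] smooth_on2_pv)
  moreover have "jet_vanishes m (pu (\<lambda>q. g q + h q)) p \<longleftrightarrow> jet_vanishes m (\<lambda>q. pu g q + pu h q) p"
    "jet_vanishes m (pv (\<lambda>q. g q + h q)) p \<longleftrightarrow> jet_vanishes m (\<lambda>q. pv g q + pv h q) p"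
    by (intro jet_vanishes_cong[OF assms(1,2)]; simp add: pu_add pv_add dg dh)+
  ultimately show ?case
    by (simp add: jet_vanishes_Suc_iff[OF assms(1,2) smooth_on2_add[OF assms(1) Suc.prems(1,2)]] g h)
qed simp

lemma jet_vanishes_bilinear_left:
  assumes "open U" "p \<in> U" "bounded_bilinear bil" "smooth_on2 U x" "smooth_on2 U y"
    and "jet_vanishes m x p"
  shows "jet_vanishes m (\<lambda>q. bil (x q) (y q)) p"
  using assms(4-)
proof (induction m arbitrary: x y)
  case 0
  then show ?case
    by (simp add: bounded_bilinear.zero_left[OF assms(3)])
next
  case (Suc m)
  have dx: "\<And>q. q \<in> U \<Longrightarrow> x differentiable at q" and dy: "\<And>q. q \<in> U \<Longrightarrow> y differentiable at q"
    using Suc.prems smooth_on2_differentiable by blast+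
  have x: "x p = 0" "jet_vanishes m (pu x) p" "jet_vanishes m (pv x) p"
    using Suc.prems jet_vanishes_Suc_iff[OF assms(1,2)] by blast+
  have "jet_vanishes m x p"
    using jet_vanishes_mono[OF Suc.prems(3), of m] by simp
  have smooth: "smooth_on2 U (pu x)" "smooth_on2 U (pv x)" "smooth_on2 U (pu y)" "smooth_on2 U (pv y)"
    using Suc.prems smooth_on2_pu[OF assms(1)] smooth_on2_pv by auto
  have "jet_vanishes m (\<lambda>q. bil (x q) (pu y q) + bil (pu x q) (y q)) p"
    "jet_vanishes m (\<lambda>q. bil (x q) (pv y q) + bil (pv x q) (y q)) p"
    using Suc.prems smooth x \<open>jet_vanishes m x p\<close>
    by (auto intro!: jet_vanishes_add[OF assms(1,2)] Suc.IH smooth_on2_bilinear[OF assms(1,3)])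
  moreover have "jet_vanishes m (pu (\<lambda>q. bil (x q) (y q))) p
    \<longleftrightarrow> jet_vanishes m (\<lambda>q. bil (x q) (pu y q) + bil (pu x q) (y q)) p"
    "jet_vanishes m (pv (\<lambda>q. bil (x q) (y q))) p
      \<longleftrightarrow> jet_vanishes m (\<lambda>q. bil (x q) (pv y q) + bil (pv x q) (y q)) p"
    by (intro jet_vanishes_cong[OF assms(1,2)]; simp add: pu_bilinear pv_bilinear assms(3) dx dy)+
  ultimately show ?case
    by (simp add: jet_vanishes_Suc_iff[OF assms(1,2) smooth_on2_bilinear[OF assms(1,3) Suc.prems(1,2)]] x
        bounded_bilinear.zero_left[OF assms(3)])
qed

lemma jet_vanishes_bilinear_right:
  assumes "open U" "p \<in> U" "bounded_bilinear bil" "smooth_on2 U x" "smooth_on2 U y"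
    and "jet_vanishes m y p"
  shows "jet_vanishes m (\<lambda>q. bil (x q) (y q)) p"
  using jet_vanishes_bilinear_left[OF assms(1,2) bounded_bilinear.flip[OF assms(3)] assms(5,4,6)] .

lemma jet_vanishes_linear:
  assumes "open U" "p \<in> U" "bounded_linear L" "smooth_on2 U g" "jet_vanishes m g p"
  shows "jet_vanishes m (\<lambda>q. L (g q)) p"
  using jet_vanishes_bilinear_right[OF assms(1,2)
    bounded_bilinear.comp[OF bounded_bilinear_scaleR bounded_linear_ident assms(3)]
      smooth_on2_const[OF assms(1), of 1] assms(4,5)]
  by simp

lemma jet_vanishes_diff:
  assumes "open U" "p \<in> U" "smooth_on2 U g" "smooth_on2 U h" "jet_vanishes m g p" "jet_vanishes m h p"
  shows "jet_vanishes m (\<lambda>q. g q - h q) p"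
  using jet_vanishes_add[OF assms(1,2,3)
    smooth_on2_linear[OF assms(1) bounded_linear_minus[OF bounded_linear_ident] assms(4)]
      assms(5) jet_vanishes_linear[OF assms(1,2) bounded_linear_minus[OF bounded_linear_ident] assms(4,6)]]
  by simp

lemma jet_vanishes_scale_iff:
  fixes g :: "real \<times> real \<Rightarrow> real"
  assumes "open U" "p \<in> U" "smooth_on2 U g" "c \<noteq> 0"
  shows "jet_vanishes m (\<lambda>q. c * g q) p \<longleftrightarrow> jet_vanishes m g p"
proof
  assume "jet_vanishes m (\<lambda>q. c * g q) p"
  from jet_vanishes_linear[OF assms(1,2) bounded_linear_mult_right[of "inverse c"]
      smooth_on2_linear[OF assms(1) bounded_linear_mult_right assms(3)] this]
  show "jet_vanishes m g p"
    using assms(4) by (simp add: mult.assoc[symmetric])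
qed (rule jet_vanishes_linear[OF assms(1,2) bounded_linear_mult_right assms(3)])

lemma jet_vanishes_Pair_iff:
  assumes "open U" "p \<in> U" "smooth_on2 U x" "smooth_on2 U y"
  shows "jet_vanishes m (\<lambda>q. (x q, y q)) p \<longleftrightarrow> jet_vanishes m x p \<and> jet_vanishes m y p"
proof -
  have inl: "bounded_linear (\<lambda>a. (a, 0))" and inr: "bounded_linear (\<lambda>b. (0, b))"
    by (auto intro!: bounded_linear_Pair bounded_linear_ident bounded_linear_zero)
  have sums: "(\<lambda>q. (x q, y q)) = (\<lambda>q. (x q, 0) + (0, y q))"
    by simp
  have smooth: "smooth_on2 U (\<lambda>q. (x q, y q))"
    unfolding sums using assms(1,3,4)
    by (intro smooth_on2_add smooth_on2_linear[OF _ inl] smooth_on2_linear[OF _ inr])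
  show ?thesis
  proof
    assume "jet_vanishes m (\<lambda>q. (x q, y q)) p"
    from jet_vanishes_linear[OF assms(1,2) bounded_linear_fst smooth this]
      jet_vanishes_linear[OF assms(1,2) bounded_linear_snd smooth this]
    show "jet_vanishes m x p \<and> jet_vanishes m y p"
      by simp
  next
    assume "jet_vanishes m x p \<and> jet_vanishes m y p"
    then show "jet_vanishes m (\<lambda>q. (x q, y q)) p"
      unfolding sums using assms
      by (intro jet_vanishes_add jet_vanishes_linear[OF _ _ inl] jet_vanishes_linear[OF _ _ inr]
        smooth_on2_linear[OF _ inl]
          smooth_on2_linear[OF _ inr]) auto
  qed
qed

lemma jet_vanishes_lincomb:
  assumes "open U" "p \<in> U" "smooth_on2 U X" "smooth_on2 U Y" "smooth_on2 U P" "smooth_on2 U Q"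
    and "jet_vanishes m X p" "jet_vanishes m Y p"
  shows "jet_vanishes m (\<lambda>q. X q *\<^sub>R P q + Y q *\<^sub>R Q q) p"
  using assms
  by (intro jet_vanishes_add jet_vanishes_bilinear_left[OF _ _ bounded_bilinear_scaleR] smooth_on2_scaleR)

lemma jet_vanishes_lincomb_derivative:
  fixes X Y X' Y' :: "real \<times> real \<Rightarrow> real"
  assumes U: "open U" "p \<in> U"
    and smooth: "smooth_on2 U X" "smooth_on2 U Y" "smooth_on2 U P'" "smooth_on2 U Q'" "smooth_on2 U W'"
    and jets: "jet_vanishes m X p" "jet_vanishes m Y p" "jet_vanishes m W' p"
    and W': "\<And>q. q \<in> U \<Longrightarrow> W' q = (X q *\<^sub>R P' q + Y q *\<^sub>R Q' q) + (X' q *\<^sub>R P q + Y' q *\<^sub>R Q q)"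
  shows "jet_vanishes m (\<lambda>q. X' q *\<^sub>R P q + Y' q *\<^sub>R Q q) p"
proof -
  have "jet_vanishes m (\<lambda>q. W' q - (X q *\<^sub>R P' q + Y q *\<^sub>R Q' q)) p"
    using U smooth jets by (intro jet_vanishes_diff jet_vanishes_lincomb smooth_on2_lincomb)
  then show ?thesis
    by (rule jet_vanishes_cong[OF U, THEN iffD1, rotated]) (simp add: W')
qed

lemma jet_vanishes_lincomb_iff:
  fixes X Y :: "real \<times> real \<Rightarrow> real"
  assumes U: "open U" "p \<in> U" and P: "smooth_on2 U P" and Q: "smooth_on2 U Q"
    and X: "smooth_on2 U X" and Y: "smooth_on2 U Y"
    and indep: "\<And>a b. a *\<^sub>R P p + b *\<^sub>R Q p = 0 \<Longrightarrow> a = 0 \<and> b = 0"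
  shows "jet_vanishes m (\<lambda>q. X q *\<^sub>R P q + Y q *\<^sub>R Q q) p \<longleftrightarrow> jet_vanishes m X p \<and> jet_vanishes m Y p"
proof
  show "jet_vanishes m X p \<and> jet_vanishes m Y p" if "jet_vanishes m (\<lambda>q. X q *\<^sub>R P q + Y q *\<^sub>R Q q) p"
    using X Y that
  proof (induction m arbitrary: X Y)
    case 0
    then show ?case
      using indep by simp
  next
    case (Suc m)
    have smooth_partials: "smooth_on2 U (pu X)" "smooth_on2 U (pu Y)"
      "smooth_on2 U (pv X)" "smooth_on2 U (pv Y)"
      "smooth_on2 U (pu P)" "smooth_on2 U (pu Q)" "smooth_on2 U (pv P)" "smooth_on2 U (pv Q)"
      using Suc.prems P Q smooth_on2_pu[OF U(1)] smooth_on2_pv by blast+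
    have diff: "X differentiable at q" "Y differentiable at q"
      "P differentiable at q" "Q differentiable at q"
      if "q \<in> U" for q
      using Suc.prems P Q that smooth_on2_differentiable by blast+
    have W: "smooth_on2 U (\<lambda>q. X q *\<^sub>R P q + Y q *\<^sub>R Q q)"
      using Suc.prems P Q U(1) by (intro smooth_on2_lincomb)
    have XY: "jet_vanishes m X p" "jet_vanishes m Y p"
      using Suc.IH[OF Suc.prems(1,2) jet_vanishes_mono[OF Suc.prems(3)]] by simp_all
    have "jet_vanishes m (\<lambda>q. pu X q *\<^sub>R P q + pu Y q *\<^sub>R Q q) p"
      using Suc.prems(3) jet_vanishes_Suc_iff[OF U W] diff
      by (intro jet_vanishes_lincomb_derivative[OF U Suc.prems(1,2) smooth_partials(5,6)
        smooth_on2_pu[OF U(1) W] XY])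
         (auto simp: pu_lincomb)
    then have u: "jet_vanishes m (pu X) p" "jet_vanishes m (pu Y) p"
      using Suc.IH smooth_partials by blast+
    have "jet_vanishes m (\<lambda>q. pv X q *\<^sub>R P q + pv Y q *\<^sub>R Q q) p"
      using Suc.prems(3) jet_vanishes_Suc_iff[OF U W] diff
      by (intro jet_vanishes_lincomb_derivative[OF U Suc.prems(1,2) smooth_partials(7,8)
        smooth_on2_pv[OF W] XY])
         (auto simp: pv_lincomb)
    then have v: "jet_vanishes m (pv X) p" "jet_vanishes m (pv Y) p"
      using Suc.IH smooth_partials by blast+
    have "X p = 0 \<and> Y p = 0"
      using indep jet_vanishes_mono[OF Suc.prems(3), of 0] by simp
    then show ?case
      using u v
      by (simp add: jet_vanishes_Suc_iff[OF U Suc.prems(1)] jet_vanishes_Suc_iff[OF U Suc.prems(2)])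
  qed
qed (use assms in \<open>auto intro: jet_vanishes_lincomb\<close>)

section \<open>The focal map\<close>

lemma cross3_triple_independent:
  fixes P Q N :: "real^3"
  assumes "cross3 P Q \<bullet> N \<noteq> 0" "a *\<^sub>R P + b *\<^sub>R Q = 0"
  shows "a = 0 \<and> b = 0"
proof -
  have "a * (cross3 P Q \<bullet> N) = cross3 (a *\<^sub>R P + b *\<^sub>R Q) Q \<bullet> N"
    and "b * (cross3 P Q \<bullet> N) = cross3 P (a *\<^sub>R P + b *\<^sub>R Q) \<bullet> N"
    by (simp_all add: cross_add_left cross_add_right cross_mult_left
      cross_mult_right inner_add_left)
  then have "a * (cross3 P Q \<bullet> N) = 0" "b * (cross3 P Q \<bullet> N) = 0"
    unfolding assms(2) by simp_all
  then show ?thesis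
    using assms(1) by simp
qed

lemma smooth_on2_frame_coefficients:
  fixes P Q N W :: "real \<times> real \<Rightarrow> real^3" and a b :: "real \<times> real \<Rightarrow> real"
  assumes U: "open U" and smooth: "smooth_on2 U P" "smooth_on2 U Q" "smooth_on2 U N" "smooth_on2 U W"
    and det: "\<And>q. q \<in> U \<Longrightarrow> cross3 (P q) (Q q) \<bullet> N q \<noteq> 0"
    and W: "\<And>q. q \<in> U \<Longrightarrow> W q = a q *\<^sub>R P q + b q *\<^sub>R Q q"
  shows "smooth_on2 U a" "smooth_on2 U b"
proof -
  have bilinear_cross3: "bounded_bilinear cross3"
    using bilinear_conv_bounded_bilinear bilinear_cross by blast
  have triple: "smooth_on2 U (\<lambda>q. cross3 (X q) (Y q) \<bullet> N q)" if "smooth_on2 U X" "smooth_on2 U Y" for X Y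
    using U that smooth(3)
    by (intro smooth_on2_bilinear[OF U bounded_bilinear_inner] smooth_on2_bilinear[OF U bilinear_cross3])
  have inv_det: "smooth_on2 U (\<lambda>q. inverse (cross3 (P q) (Q q) \<bullet> N q))"
    using triple smooth det U by (intro smooth_on2_inverse) auto
  \<comment> \<open>Cramer's rule\<close>
  have "a q = cross3 (W q) (Q q) \<bullet> N q * inverse (cross3 (P q) (Q q) \<bullet> N q)"
    "b q = cross3 (P q) (W q) \<bullet> N q * inverse (cross3 (P q) (Q q) \<bullet> N q)" if "q \<in> U" for q
    using det[OF that]
    by (simp_all add: W[OF that] cross_add_left cross_add_right cross_mult_left
      cross_mult_right inner_add_left)
  moreover have "smooth_on2 U (\<lambda>q. cross3 (W q) (Q q) \<bullet> N q * inverse (cross3 (P q) (Q q) \<bullet> N q))"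
    "smooth_on2 U (\<lambda>q. cross3 (P q) (W q) \<bullet> N q * inverse (cross3 (P q) (Q q) \<bullet> N q))"
    using triple smooth inv_det by (simp_all add: smooth_on2_mult[OF U])
  ultimately show "smooth_on2 U a" "smooth_on2 U b"
    using smooth_on2_cong[OF U] by (metis (no_types, lifting))+
qed

lemma frame_integrability:
  fixes f G :: "real \<times> real \<Rightarrow> 'a::real_normed_vector" and A B C :: "real \<times> real \<Rightarrow> real"
  assumes U: "open U" "q \<in> U"
    and smooth: "smooth_on2 U f" "smooth_on2 U G" "smooth_on2 U A" "smooth_on2 U B" "smooth_on2 U C"
    and Gu: "\<And>q. q \<in> U \<Longrightarrow> pu G q = A q *\<^sub>R pu f q + B q *\<^sub>R pv f q"
    and Gv: "\<And>q. q \<in> U \<Longrightarrow> pv G q = B q *\<^sub>R pu f q + C q *\<^sub>R pv f q"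
  shows "B q *\<^sub>R (pu (pu f) q - pv (pv f) q) + (C q - A q) *\<^sub>R pu (pv f) q =
    (pv A q - pu B q) *\<^sub>R pu f q + (pv B q - pu C q) *\<^sub>R pv f q"
proof -
  have diff: "A differentiable at q" "B differentiable at q" "C differentiable at q"
    "pu f differentiable at q" "pv f differentiable at q"
    using U smooth smooth_on2_differentiable smooth_on2_pu smooth_on2_pv by blast+
  have "pv (pu G) q = (A q *\<^sub>R pv (pu f) q + B q *\<^sub>R pv (pv f) q) + (pv A q *\<^sub>R pu f q + pv B q *\<^sub>R pv f q)"
    using pv_cong_open[OF U(1,2) Gu] pv_lincomb[OF diff(1,2,4,5)] by simp
  moreover have "pu (pv G) q = (B q *\<^sub>R pu (pu f) q + C q *\<^sub>R pu (pv f) q)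
    + (pu B q *\<^sub>R pu f q + pu C q *\<^sub>R pv f q)"
    using pu_cong_open[OF U(1,2) Gv] pu_lincomb[OF diff(2,3,4,5)] by simp
  moreover have "pv (pu G) q = pu (pv G) q" "pv (pu f) q = pu (pv f) q"
    using smooth_on2_pv_pu_eq_pu_pv[OF U(1) _ U(2)] smooth by blast+
  ultimately have "(B q *\<^sub>R (pu (pu f) q - pv (pv f) q) + (C q - A q) *\<^sub>R pu (pv f) q) -
      ((pv A q - pu B q) *\<^sub>R pu f q + (pv B q - pu C q) *\<^sub>R pv f q) = pu (pv G) q - pv (pu G) q"
    by (simp add: algebra_simps)
  then show ?thesis
    using \<open>pv (pu G) q = pu (pv G) q\<close> by simp
qed

lemma jet_vanishes_integrability_defects:
  fixes f G :: "real \<times> real \<Rightarrow> 'a::real_normed_vector" and A B C :: "real \<times> real \<Rightarrow> real"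
  assumes U: "open U" "p \<in> U"
    and smooth: "smooth_on2 U f" "smooth_on2 U G" "smooth_on2 U A" "smooth_on2 U B" "smooth_on2 U C"
    and Gu: "\<And>q. q \<in> U \<Longrightarrow> pu G q = A q *\<^sub>R pu f q + B q *\<^sub>R pv f q"
    and Gv: "\<And>q. q \<in> U \<Longrightarrow> pv G q = B q *\<^sub>R pu f q + C q *\<^sub>R pv f q"
    and indep: "\<And>a b. a *\<^sub>R pu f p + b *\<^sub>R pv f p = 0 \<Longrightarrow> a = 0 \<and> b = 0"
    and jet_CA: "jet_vanishes m (\<lambda>q. C q - A q) p" and jet_B: "jet_vanishes m B p"
  shows "jet_vanishes m (\<lambda>q. pv A q - pu B q) p" "jet_vanishes m (\<lambda>q. pv B q - pu C q) p"
proof -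
  have sf: "smooth_on2 U (pu f)" "smooth_on2 U (pv f)" "smooth_on2 U (pu (pu f))" "smooth_on2 U (pv (pv f))"
    "smooth_on2 U (pu (pv f))"
    using smooth(1) smooth_on2_pu[OF U(1)] smooth_on2_pv by blast+
  have "jet_vanishes m (\<lambda>q. B q *\<^sub>R (pu (pu f) q - pv (pv f) q) + (C q - A q) *\<^sub>R pu (pv f) q) p"
    by (rule jet_vanishes_lincomb[OF U smooth(4) smooth_on2_diff[OF U(1) smooth(5,3)]
      smooth_on2_diff[OF U(1) sf(3,4)]
          sf(5) jet_B jet_CA])
  then have "jet_vanishes m (\<lambda>q. (pv A q - pu B q) *\<^sub>R pu f q + (pv B q - pu C q) *\<^sub>R pv f q) p"
    by (rule jet_vanishes_cong[OF U, THEN iffD1, rotated])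
      (simp add: frame_integrability[OF U(1) _ smooth Gu Gv])
  moreover have "smooth_on2 U (\<lambda>q. pv A q - pu B q)" "smooth_on2 U (\<lambda>q. pv B q - pu C q)"
    using smooth_on2_diff[OF U(1)] smooth_on2_pu[OF U(1)] smooth_on2_pv smooth by blast+
  ultimately show "jet_vanishes m (\<lambda>q. pv A q - pu B q) p" "jet_vanishes m (\<lambda>q. pv B q - pu C q) p"
    using jet_vanishes_lincomb_iff[OF U sf(1,2) _ _ indep] by blast+
qed

lemma jet_vanishes_frame_coefficients:
  fixes f G :: "real \<times> real \<Rightarrow> 'a::real_normed_vector" and A B C :: "real \<times> real \<Rightarrow> real"
  assumes U: "open U" "p \<in> U"
    and smooth: "smooth_on2 U f" "smooth_on2 U G" "smooth_on2 U A" "smooth_on2 U B" "smooth_on2 U C"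
    and Gu: "\<And>q. q \<in> U \<Longrightarrow> pu G q = A q *\<^sub>R pu f q + B q *\<^sub>R pv f q"
    and Gv: "\<And>q. q \<in> U \<Longrightarrow> pv G q = B q *\<^sub>R pu f q + C q *\<^sub>R pv f q"
    and indep: "\<And>a b. a *\<^sub>R pu f p + b *\<^sub>R pv f p = 0 \<Longrightarrow> a = 0 \<and> b = 0"
    and A0: "A p = 0" and C0: "C p = 0"
    and jet_CA: "jet_vanishes m (\<lambda>q. C q - A q) p" and jet_B: "jet_vanishes m B p"
  shows "jet_vanishes m A p \<and> jet_vanishes m C p"
proof (cases m)
  case 0
  then show ?thesis
    using A0 C0 by simp
next
  case (Suc n)
  define E where "E q = C q - A q" for q
  have sE: "smooth_on2 U E"
    unfolding E_def using U(1) smooth by (intro smooth_on2_diff)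
  have s': "smooth_on2 U (pu A)" "smooth_on2 U (pv A)" "smooth_on2 U (pu B)" "smooth_on2 U (pv B)"
    "smooth_on2 U (pu C)" "smooth_on2 U (pv C)" "smooth_on2 U (pu E)" "smooth_on2 U (pv E)"
    using smooth sE smooth_on2_pu[OF U(1)] smooth_on2_pv by blast+
  have AB: "jet_vanishes n (\<lambda>q. pv A q - pu B q) p" and BC: "jet_vanishes n (\<lambda>q. pv B q - pu C q) p"
    using jet_vanishes_integrability_defects[OF U smooth Gu Gv indep jet_CA jet_B]
      Suc jet_vanishes_mono[of m _ p n]
    by simp_all
  have B': "jet_vanishes n (pu B) p" "jet_vanishes n (pv B) p"
    using jet_B Suc jet_vanishes_Suc_iff[OF U smooth(4)] by simp_all
  have E': "jet_vanishes n (pu E) p" "jet_vanishes n (pv E) p"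
    using jet_CA Suc jet_vanishes_Suc_iff[OF U sE] unfolding E_def by simp_all
  have "jet_vanishes n (\<lambda>q. (pv A q - pu B q) + pu B q) p"
    using AB B' U s' by (intro jet_vanishes_add smooth_on2_diff)
  then have Av: "jet_vanishes n (pv A) p"
    by simp
  have "jet_vanishes n (\<lambda>q. pv B q - (pv B q - pu C q)) p"
    by (rule jet_vanishes_diff[OF U s'(4) smooth_on2_diff[OF U(1) s'(4,5)] B'(2) BC])
  then have Cu: "jet_vanishes n (pu C) p"
    by simp
  have pu_E: "pu E q = pu C q - pu A q" and pv_E: "pv E q = pv C q - pv A q" if "q \<in> U" for q
    unfolding E_def using that smooth by (simp_all add: pu_diff pv_diff smooth_on2_differentiable)
  have "jet_vanishes n (\<lambda>q. pu C q - pu E q) p"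
    using Cu E' U s' by (intro jet_vanishes_diff)
  then have Au: "jet_vanishes n (pu A) p"
    by (rule jet_vanishes_cong[OF U, THEN iffD1, rotated]) (simp add: pu_E)
  have "jet_vanishes n (\<lambda>q. pv A q + pv E q) p"
    using Av E' U s' by (intro jet_vanishes_add)
  then have Cv: "jet_vanishes n (pv C) p"
    by (rule jet_vanishes_cong[OF U, THEN iffD1, rotated]) (simp add: pv_E)
  show ?thesis
    using Au Av Cu Cv A0 C0 Suc
    by (simp add: jet_vanishes_Suc_iff[OF U smooth(3)] jet_vanishes_Suc_iff[OF U smooth(5)])
qed

lemma jet_vanishes_Suc_potential_iff:
  fixes f G :: "real \<times> real \<Rightarrow> 'a::real_normed_vector" and A B C :: "real \<times> real \<Rightarrow> real"
  assumes U: "open U" "p \<in> U"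
    and smooth: "smooth_on2 U f" "smooth_on2 U G" "smooth_on2 U A" "smooth_on2 U B" "smooth_on2 U C"
    and Gu: "\<And>q. q \<in> U \<Longrightarrow> pu G q = A q *\<^sub>R pu f q + B q *\<^sub>R pv f q"
    and Gv: "\<And>q. q \<in> U \<Longrightarrow> pv G q = B q *\<^sub>R pu f q + C q *\<^sub>R pv f q"
    and indep: "\<And>a b. a *\<^sub>R pu f p + b *\<^sub>R pv f p = 0 \<Longrightarrow> a = 0 \<and> b = 0"
    and G0: "G p = 0" and A0: "A p = 0" and C0: "C p = 0"
  shows "jet_vanishes (Suc m) G p \<longleftrightarrow> jet_vanishes m (\<lambda>q. C q - A q) p \<and> jet_vanishes m B p"
proof -
  have sf: "smooth_on2 U (pu f)" "smooth_on2 U (pv f)"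
    using smooth(1) smooth_on2_pu[OF U(1)] smooth_on2_pv by blast+
  have "jet_vanishes (Suc m) G p \<longleftrightarrow> jet_vanishes m (pu G) p \<and> jet_vanishes m (pv G) p"
    using jet_vanishes_Suc_iff[OF U smooth(2)] G0 by simp
  also have "\<dots> \<longleftrightarrow> jet_vanishes m (\<lambda>q. A q *\<^sub>R pu f q + B q *\<^sub>R pv f q) p \<and>
      jet_vanishes m (\<lambda>q. B q *\<^sub>R pu f q + C q *\<^sub>R pv f q) p"
    using jet_vanishes_cong[OF U Gu] jet_vanishes_cong[OF U Gv] by simp
  also have "\<dots> \<longleftrightarrow> jet_vanishes m A p \<and> jet_vanishes m B p \<and> jet_vanishes m C p"
    using jet_vanishes_lincomb_iff[OF U sf _ _ indep] smooth by blast
  also have "\<dots> \<longleftrightarrow> jet_vanishes m (\<lambda>q. C q - A q) p \<and> jet_vanishes m B p"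
    using jet_vanishes_diff[OF U smooth(5,3)]
      jet_vanishes_frame_coefficients[OF U smooth Gu Gv indep A0 C0] by blast
  finally show ?thesis .
qed

lemma smooth_on2_weingarten_coefficients:
  fixes f xi :: "real \<times> real \<Rightarrow> real^3"
  assumes U: "open U" and f: "smooth_on2 U f" and xi: "smooth_on2 U xi"
    and transversal: "\<forall>p\<in>U. cross3 (pu f p) (pv f p) \<bullet> xi p \<noteq> 0"
    and weing_u: "\<forall>p\<in>U. pu xi p = - (b11 p *\<^sub>R pu f p) - b12 p *\<^sub>R pv f p"
    and weing_v: "\<forall>p\<in>U. pv xi p = - (b12 p *\<^sub>R pu f p) - b22 p *\<^sub>R pv f p"
  shows "smooth_on2 U b11" "smooth_on2 U b12" "smooth_on2 U b22"
proof -
  have sf: "smooth_on2 U (pu f)" "smooth_on2 U (pv f)"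
    and sxi: "smooth_on2 U (\<lambda>q. - pu xi q)" "smooth_on2 U (\<lambda>q. - pv xi q)"
    using f xi smooth_on2_pu[OF U] smooth_on2_pv
      smooth_on2_linear[OF U bounded_linear_minus[OF bounded_linear_ident]]
    by blast+
  show "smooth_on2 U b11" "smooth_on2 U b12"
    by (rule smooth_on2_frame_coefficients[OF U sf xi sxi(1), where a = b11 and b = b12];
        use transversal weing_u in simp)+
  show "smooth_on2 U b22"
    by (rule smooth_on2_frame_coefficients[OF U sf xi sxi(2), where a = b12 and b = b22];
        use transversal weing_v in simp)
qed

lemma focal_map_partials:
  assumes "f differentiable at q" "xi differentiable at q"
    and weing_u: "pu xi q = - (b11 *\<^sub>R pu f q) - b12 *\<^sub>R pv f q"
    and weing_v: "pv xi q = - (b12 *\<^sub>R pu f q) - b22 *\<^sub>R pv f q"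
  shows "pu (\<lambda>p. (f p + c *\<^sub>R xi p) - K) q = (1 - c * b11) *\<^sub>R pu f q + (- c * b12) *\<^sub>R pv f q"
    and "pv (\<lambda>p. (f p + c *\<^sub>R xi p) - K) q = (- c * b12) *\<^sub>R pu f q + (1 - c * b22) *\<^sub>R pv f q"
proof -
  have "pu (\<lambda>p. (f p + c *\<^sub>R xi p) - K) q = pu f q + c *\<^sub>R pu xi q"
    and "pv (\<lambda>p. (f p + c *\<^sub>R xi p) - K) q = pv f q + c *\<^sub>R pv xi q"
    using assms(1,2)
    by (simp_all add: pu_diff pv_diff pu_add pv_add pu_linear pv_linear bounded_linear_scaleR_right
        differentiable_add differentiable_scaleR)
  then show "pu (\<lambda>p. (f p + c *\<^sub>R xi p) - K) q = (1 - c * b11) *\<^sub>R pu f q + (- c * b12) *\<^sub>R pv f q"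
    and "pv (\<lambda>p. (f p + c *\<^sub>R xi p) - K) q = (- c * b12) *\<^sub>R pu f q + (1 - c * b22) *\<^sub>R pv f q"
    unfolding weing_u weing_v by (simp_all add: algebra_simps)
qed

lemma jet_vanishes_umbilic_defect_iff:
  fixes b11 b12 b22 :: "real \<times> real \<Rightarrow> real"
  assumes U: "open U" "p \<in> U" and smooth: "smooth_on2 U b11" "smooth_on2 U b12" "smooth_on2 U b22"
    and "c \<noteq> 0"
  shows "jet_vanishes m (\<lambda>q. (b11 q - b22 q, 2 * b12 q)) p \<longleftrightarrow>
    jet_vanishes m (\<lambda>q. (1 - c * b22 q) - (1 - c * b11 q)) p \<and> jet_vanishes m (\<lambda>q. - c * b12 q) p"
proof -
  have s_diff: "smooth_on2 U (\<lambda>q. b11 q - b22 q)" and s_twice: "smooth_on2 U (\<lambda>q. 2 * b12 q)"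
    using U smooth by (auto intro!: smooth_on2_diff smooth_on2_mult smooth_on2_const)
  have "(\<lambda>q. (1 - c * b22 q) - (1 - c * b11 q)) = (\<lambda>q. c * (b11 q - b22 q))"
    "(\<lambda>q. - c * b12 q) = (\<lambda>q. (- c / 2) * (2 * b12 q))"
    by (auto simp: algebra_simps)
  then show ?thesis
    using jet_vanishes_scale_iff[OF U s_diff \<open>c \<noteq> 0\<close>]
      jet_vanishes_scale_iff[OF U s_twice, of "- c / 2"] \<open>c \<noteq> 0\<close>
    by (simp add: jet_vanishes_Pair_iff[OF U s_diff s_twice])
qed

theorem lemma4p3:
  fixes U :: "(real \<times> real) set"
    and f xi :: "real \<times> real \<Rightarrow> real^3"
    and rho b11 b12 b22 :: "real \<times> real \<Rightarrow> real"
    and lambda0 :: real and k :: nat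
  assumes U_open: "open U" and U0: "(0,0) \<in> U"
    and f_smooth: "smooth_on2 U f" and xi_smooth: "smooth_on2 U xi"
    \<comment> \<open>immersion with transversal vector field: f_u, f_v, xi linearly independent\<close>
    and transversal: "\<forall>p\<in>U. cross3 (pu f p) (pv f p) \<bullet> xi p \<noteq> 0"
    \<comment> \<open>isothermal coordinates for the positive definite induced form h:
        h(du,du) = h(dv,dv) = rho > 0, h(du,dv) = 0 (Gauss formula)\<close>
    and rho_pos: "\<forall>p\<in>U. rho p > 0"
    and h11: "\<forall>p\<in>U. pu (pu f) p - rho p *\<^sub>R xi p \<in> span {pu f p, pv f p}"
    and h22: "\<forall>p\<in>U. pv (pv f) p - rho p *\<^sub>R xi p \<in> span {pu f p, pv f p}"
    and h12: "\<forall>p\<in>U. pu (pv f) p \<in> span {pu f p, pv f p}"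
    \<comment> \<open>Weingarten formula, equiaffine (tau = 0), shape operator matrix (b_ij), b12 = b21\<close>
    and weing_u: "\<forall>p\<in>U. pu xi p = - (b11 p *\<^sub>R pu f p) - b12 p *\<^sub>R pv f p"
    and weing_v: "\<forall>p\<in>U. pv xi p = - (b12 p *\<^sub>R pu f p) - b22 p *\<^sub>R pv f p"
    \<comment> \<open>(0,0) umbilical with nonzero eigenvalue lambda0\<close>
    and umb: "b11 (0,0) = lambda0" "b22 (0,0) = lambda0" "b12 (0,0) = 0"
    and lambda0_nz: "lambda0 \<noteq> 0"
    and k_ge: "k \<ge> 1"
  shows "jet_vanishes (k - 1) (\<lambda>p. (b11 p - b22 p, 2 * b12 p)) (0,0) \<longleftrightarrow>
         jet_vanishes k (\<lambda>p. (f p + (1 / lambda0) *\<^sub>R xi p)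
                               - (f (0,0) + (1 / lambda0) *\<^sub>R xi (0,0))) (0,0)"
proof -
  define c where "c = 1 / lambda0"
  have c: "c \<noteq> 0" "c * lambda0 = 1"
    using lambda0_nz by (simp_all add: c_def)
  have sb: "smooth_on2 U b11" "smooth_on2 U b12" "smooth_on2 U b22"
    using smooth_on2_weingarten_coefficients[OF U_open f_smooth xi_smooth transversal weing_u weing_v]
    by blast+
  let ?G = "\<lambda>p. (f p + c *\<^sub>R xi p) - (f (0, 0) + c *\<^sub>R xi (0, 0))"
  have smooth: "smooth_on2 U ?G" "smooth_on2 U (\<lambda>q. 1 - c * b11 q)" "smooth_on2 U (\<lambda>q. - c * b12 q)"
    "smooth_on2 U (\<lambda>q. 1 - c * b22 q)"
    by (intro smooth_on2_diff smooth_on2_mult smooth_on2_add smooth_on2_scaleR smooth_on2_const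
        U_open f_smooth xi_smooth sb)+
  have "pu ?G q = (1 - c * b11 q) *\<^sub>R pu f q + (- c * b12 q) *\<^sub>R pv f q"
    "pv ?G q = (- c * b12 q) *\<^sub>R pu f q + (1 - c * b22 q) *\<^sub>R pv f q" if "q \<in> U" for q
    using focal_map_partials[OF smooth_on2_differentiable[OF f_smooth that]
        smooth_on2_differentiable[OF xi_smooth that] weing_u[rule_format, OF that] weing_v[rule_format, OF that]]
    by blast+
  from jet_vanishes_Suc_potential_iff[OF U_open U0 f_smooth smooth this
      cross3_triple_independent[OF transversal[rule_format, OF U0]], of "k - 1"]
  have "jet_vanishes k ?G (0, 0) \<longleftrightarrow> jet_vanishes (k - 1) (\<lambda>q. (1 - c * b22 q) - (1 - c * b11 q)) (0, 0) \<and>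
      jet_vanishes (k - 1) (\<lambda>q. - c * b12 q) (0, 0)"
    using umb c k_ge by (simp add: mult.commute)
  then show ?thesis
    using jet_vanishes_umbilic_defect_iff[OF U_open U0 sb c(1)] unfolding c_def by simp
qed

end
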